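(* Assume (AS0)–(AS3). Then: (i) for every $\epsilon>0$, $\limsup_{T\to\infty}R_\epsilon(T)/T^{1+d}<\infty$; (ii) for every $\epsilon>0$, $\limsup_{T\to\infty}R_\epsilon(T)/\big(T\,G(2\epsilon T)\big)<\infty$; (iii) if $\epsilon\in(0,\tfrac12)$, or if $\epsilon>0$ and $f$ is non-increasing, then $\limsup_{T\to\infty}R_\epsilon(T)/\big(T\,G(T)\big)<\infty$.
   Context: Let $d\ge 1$. Let $V=\{V(t,x):(t,x)\in\mathbb Z_+\times\mathbb Z^d\}$ be i.i.d. real random variables under a probability measure $Q$ (the expectation is also denoted $Q$). Assumptions: (AS0) $V(0,0)$ is non-degenerate; (AS1) $Q(V(0,0))=0$; (AS2) there is $\bar\eta>0$ with $Q(e^{\eta V(0,0)})<\infty$ for all $|\eta|<\bar\eta$; (AS3) there exist $\bar x>0$ and a continuous strictly increasing function $G:[0,\infty)\to[0,\infty)$ with $G(0)=0$, $\lim_{x\to\infty}G(x)=\infty$, and $Q(-V(0,0)>x)=e^{-xG(x)}$ for all $x\ge\bar x$. $f(x)=G(x)/x^d$ for $x>0$. $P_x$ is the law of simple symmetric nearest-neighbour random walk $\gamma$ on $\mathbb Z^d$ with $\gamma(0)=x$, independent of $V$, $E_x$ its expectation; $H_\gamma(T)=\sum_{t=0}^{T-1}V(t,\gamma(t))$ and $Z(T)=E_0 e^{H_\gamma(T)}$. There is a deterministic $\lambda\in[0,\infty)$ with $\frac1T\ln Z(T)\to\lambda$ $Q$-a.s. For $\epsilon>0$, $R_\epsilon(T)=-\ln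 Q(Z(T)\le e^{(\lambda-\epsilon)T})$. *)

theory Defs
  imports "HOL-Probability.Probability"
begin

text \<open>Nearest-neighbour unit steps in Z^d, with Z^d rendered as int ^ 'd, d = CARD('d).\<close>
definition unit_steps :: "(int ^ 'd) set" where
  "unit_steps = {axis i 1 | i. True} \<union> {axis i (-1) | i. True}"

definition walk :: "(int ^ 'd) list \<Rightarrow> nat \<Rightarrow> int ^ 'd" where
  "walk xs t = sum_list (take t xs)"

text \<open>Z(T) = E_0 exp(sum_{t<T} V(t, gamma t)): the walk positions gamma(0),...,gamma(T-1)
  are determined by T-1 i.i.d. uniform steps, each with probability 1/(2d).\<close>
definition partition_fn :: "(nat \<times> (int ^ 'd) \<Rightarrow> 'a \<Rightarrow> real) \<Rightarrow> nat \<Rightarrow> 'a \<Rightarrow> real" where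
  "partition_fn V T \<omega> =
     (\<Sum>xs\<in>{xs. set xs \<subseteq> (unit_steps :: (int ^ 'd) set) \<and> length xs = T - 1}.
        (1 / (2 * real CARD('d)) ^ (T - 1)) * exp (\<Sum>t<T. V (t, walk xs t) \<omega>))"

text \<open>R_eps(T) = - ln Q(Z(T) <= exp((lambda - eps) T)), valued in extended reals
  (= +infinity when the probability is 0).\<close>
definition rate_fn :: "'a measure \<Rightarrow> (nat \<times> (int ^ 'd) \<Rightarrow> 'a \<Rightarrow> real) \<Rightarrow> real \<Rightarrow> real \<Rightarrow> nat \<Rightarrow> ereal" where
  "rate_fn M V lam eps T =
     (let p = measure M {\<omega> \<in> space M. partition_fn V T \<omega> \<le> exp ((lam - eps) * real T)}
      in if p = 0 then \<infinity> else ereal (- ln p))"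

end

theory Submission
  imports Defs
begin

(* Box strategy (part (i)): if every potential V(t,x) with t < T and x in the cube
   [-T,T]^d is at most -c, then Z(T) <= exp(-cT).  By independence this event has
   probability q^N with q = Q(V <= -c) > 0 and N <= T (2T+1)^d, so R_eps(T) = O(T^(1+d)).

   Origin strategy (parts (ii),(iii)): Z(T) = exp(V(0,0)) * Z'(T), where Z'(T) only depends
   on the potentials away from the space-time origin and hence is independent of V(0,0).
   Since (ln Z(T))/T -> lambda, Z'(T) <= exp((lambda+eps)T) with probability >= 1/4 for
   large T, so Q(Z(T) <= exp((lambda-eps)T)) >= Q(V(0,0) <= -2 eps T)/4, and the tail
   assumption (AS3) yields R_eps(T) <= 2 eps T G(2 eps T) + ln 4.  Part (iii) follows by
   comparing G(2 eps T) with G(T).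

   Only independence, identical distribution, the tail law (AS3), G -> infinity and the
   a.s. limit lambda are needed; (AS0)-(AS2), continuity of G and lambda >= 0 are not. *)

section \<open>Nearest-neighbour walks\<close>

lemma finite_unit_steps: "finite (unit_steps :: (int^'d) set)"
proof -
  have "(unit_steps :: (int^'d) set) = range (\<lambda>i::'d. axis i (1::int)) \<union> range (\<lambda>i::'d. axis i (-1::int))"
    unfolding unit_steps_def by auto
  then show ?thesis by (metis finite finite_Un finite_imageI)
qed

lemma card_unit_steps: "card (unit_steps :: (int^'d) set) \<le> 2 * CARD('d)"
proof -
  have "card (unit_steps :: (int^'d) set)
      \<le> card (range (\<lambda>i::'d. axis i (1::int))) + card (range (\<lambda>i::'d. axis i (-1::int)))"
    unfolding unit_steps_def by (rule order.trans[OF card_Un_le]) (simp add: full_SetCompr_eq)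
  also have "\<dots> \<le> CARD('d) + CARD('d)" by (intro add_mono card_image_le) auto
  finally show ?thesis by simp
qed

lemma unit_step_coordinate: "u \<in> unit_steps \<Longrightarrow> \<bar>u $ i\<bar> \<le> 1"
  unfolding unit_steps_def by (auto simp: axis_def)

lemma sum_list_unit_steps_coordinate:
  "set ys \<subseteq> unit_steps \<Longrightarrow> \<bar>sum_list ys $ i\<bar> \<le> int (length ys)"
proof (induction ys)
  case Nil then show ?case by (simp add: zero_vec_def)
next
  case (Cons y ys)
  have "\<bar>y $ i\<bar> \<le> 1" using Cons.prems unit_step_coordinate[of y i] by simp
  moreover have "\<bar>sum_list ys $ i\<bar> \<le> int (length ys)" using Cons by simp
  moreover have "\<bar>y $ i + sum_list ys $ i\<bar> \<le> \<bar>y $ i\<bar> + \<bar>sum_list ys $ i\<bar>"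
    by (rule abs_triangle_ineq)
  ultimately show ?case by simp
qed

definition cube :: "nat \<Rightarrow> (int^'d) set" where
  "cube T = {x. \<forall>i. \<bar>x $ i\<bar> \<le> int T}"

lemma walk_in_cube:
  assumes "set xs \<subseteq> unit_steps" "t \<le> T"
  shows "walk xs t \<in> cube T"
proof -
  have "set (take t xs) \<subseteq> unit_steps" by (rule order_trans[OF set_take_subset assms(1)])
  then have "\<bar>walk xs t $ i\<bar> \<le> int (length (take t xs))" for i
    unfolding walk_def by (rule sum_list_unit_steps_coordinate)
  moreover have "int (length (take t xs)) \<le> int T" using assms(2) by simp
  ultimately have "\<bar>walk xs t $ i\<bar> \<le> int T" for i by (rule order_trans)
  then show ?thesis unfolding cube_def by blast
qed

lemma finite_card_cube:
  "finite (cube T :: (int^'d) set) \<and> card (cube T :: (int^'d) set) \<le> (2*T+1) ^ CARD('d)"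
proof -
  let ?f = "\<lambda>x::int^'d. \<lambda>i. x $ i"
  let ?P = "PiE (UNIV::'d set) (\<lambda>_. {-int T..int T})"
  have inj: "inj_on ?f (cube T)" by (auto simp: inj_on_def vec_eq_iff fun_eq_iff)
  have "x $ i \<in> {-int T..int T}" if "x \<in> cube T" for x i
  proof -
    have "\<bar>x $ i\<bar> \<le> int T" using that unfolding cube_def by blast
    then show ?thesis by (simp add: abs_le_iff)
  qed
  then have sub: "?f ` cube T \<subseteq> ?P" by auto
  have fin: "finite ?P" by (simp add: finite_PiE)
  have "card {-int T..int T} = 2*T+1" by simp
  then have "card ?P = (2*T+1) ^ CARD('d)" by (simp add: card_PiE)
  then show ?thesis using card_inj_on_le[OF inj sub fin] inj sub fin finite_imageD finite_subset
    by metis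
qed

definition paths :: "nat \<Rightarrow> (int^'d) list set" where
  "paths T = {xs. set xs \<subseteq> unit_steps \<and> length xs = T - 1}"

lemma finite_paths: "finite (paths T)"
  unfolding paths_def using finite_unit_steps by (rule finite_lists_length_eq)

lemma paths_nonempty: "replicate (T - 1) (axis i 1) \<in> paths T"
  unfolding paths_def unit_steps_def by auto

lemma total_path_weight:
  "real (card (paths T :: (int^'d) list set)) * (1 / (2 * real CARD('d)) ^ (T - 1)) \<le> 1"
proof -
  have "card (paths T :: (int^'d) list set) = card (unit_steps :: (int^'d) set) ^ (T - 1)"
    unfolding paths_def by (rule card_lists_length_eq[OF finite_unit_steps])
  also have "\<dots> \<le> (2 * CARD('d)) ^ (T - 1)" by (rule power_mono[OF card_unit_steps]) simp
  finally have "real (card (paths T :: (int^'d) list set)) \<le> real ((2 * CARD('d)) ^ (T - 1))"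
    by (rule of_nat_mono)
  then have "real (card (paths T :: (int^'d) list set)) / (2 * real CARD('d)) ^ (T - 1) \<le> 1"
    by simp
  then show ?thesis by (simp add: power_one_over)
qed

lemma partition_fn_paths:
  "partition_fn (V :: nat \<times> (int^'d) \<Rightarrow> 'a \<Rightarrow> real) T \<omega> =
     (\<Sum>xs\<in>paths T. (1 / (2 * real CARD('d)) ^ (T - 1)) * exp (\<Sum>t<T. V (t, walk xs t) \<omega>))"
  unfolding partition_fn_def paths_def by simp

lemma partition_fn_pos: "partition_fn (V :: nat \<times> (int^'d) \<Rightarrow> 'a \<Rightarrow> real) T \<omega> > 0"
  unfolding partition_fn_paths by (rule sum_pos[OF finite_paths]) (use paths_nonempty in auto)

lemma partition_fn_le_of_box_bound:
  fixes V :: "nat \<times> (int^'d) \<Rightarrow> 'a \<Rightarrow> real"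
  assumes bound: "\<And>t x. t < T \<Longrightarrow> x \<in> cube T \<Longrightarrow> V (t, x) \<omega> \<le> b"
  shows "partition_fn V T \<omega> \<le> exp (b * real T)"
proof -
  define w where "w = (1 / (2 * real CARD('d)) ^ (T - 1))"
  have w0: "w \<ge> 0" unfolding w_def by simp
  have path_sum: "(\<Sum>t<T. V (t, walk xs t) \<omega>) \<le> b * real T" if "xs \<in> paths T" for xs
  proof -
    have "V (t, walk xs t) \<omega> \<le> b" if "t < T" for t
      using \<open>xs \<in> paths T\<close> that unfolding paths_def by (simp add: bound walk_in_cube)
    then have "(\<Sum>t<T. V (t, walk xs t) \<omega>) \<le> (\<Sum>t<T. b)" by (intro sum_mono) simp
    then show ?thesis by (simp add: mult.commute)
  qed
  have "partition_fn V T \<omega> = (\<Sum>xs\<in>paths T. w * exp (\<Sum>t<T. V (t, walk xs t) \<omega>))"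
    unfolding partition_fn_paths w_def ..
  also have "\<dots> \<le> (\<Sum>xs\<in>(paths T :: (int^'d) list set). w * exp (b * real T))"
    using path_sum w0 by (intro sum_mono mult_left_mono) simp_all
  also have "\<dots> = (real (card (paths T :: (int^'d) list set)) * w) * exp (b * real T)" by simp
  also have "\<dots> \<le> 1 * exp (b * real T)"
    using total_path_weight[where 'd='d, of T] unfolding w_def[symmetric] by (intro mult_right_mono) simp_all
  finally show ?thesis by simp
qed

lemma (in prob_space) prob_Int_ge:
  assumes "A \<in> events" "B \<in> events"
  shows "prob (A \<inter> B) \<ge> prob A + prob B - 1"
proof -
  have "prob (A \<union> B) = prob A + prob B - prob (A \<inter> B)"
    using assms by (intro measure_Un3) (auto simp: fmeasurable_def less_top[symmetric])
  moreover have "prob (A \<union> B) \<le> 1" by simp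
  ultimately show ?thesis by linarith
qed

text \<open>An almost surely eventually true property is eventually true with probability
  arbitrarily close to one (continuity of measure from below).\<close>
lemma (in prob_space) AE_eventually_prob:
  assumes ev: "AE \<omega> in M. eventually (\<lambda>T. P T \<omega>) sequentially"
    and meas: "\<And>T. {\<omega> \<in> space M. P T \<omega>} \<in> events"
    and c: "c < 1"
  shows "eventually (\<lambda>T. prob {\<omega> \<in> space M. P T \<omega>} > c) sequentially"
proof -
  define A where "A n = {\<omega> \<in> space M. \<forall>T. n \<le> T \<longrightarrow> P T \<omega>}" for n
  have A_events: "A n \<in> events" for n
    unfolding A_def
  proof (intro sets.sets_Collect_countable_All)
    fix T
    show "{\<omega> \<in> space M. n \<le> T \<longrightarrow> P T \<omega>} \<in> events"
    proof (cases "n \<le> T")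
      case True then show ?thesis using meas[of T] by simp
    next
      case False then show ?thesis by simp
    qed
  qed
  have inc: "incseq A" unfolding A_def incseq_def by auto
  have "(\<lambda>n. prob (A n)) \<longlonglongrightarrow> prob (\<Union> (range A))"
    using A_events inc by (intro finite_Lim_measure_incseq) auto
  moreover have "prob (\<Union> (range A)) = 1"
  proof -
    have "AE \<omega> in M. \<omega> \<in> \<Union> (range A)"
      using ev AE_space
    proof eventually_elim
      case (elim \<omega>)
      then obtain n where "\<forall>T\<ge>n. P T \<omega>" by (auto simp: eventually_sequentially)
      then show ?case using elim unfolding A_def by auto
    qed
    then show ?thesis using A_events by (subst prob_eq_1) auto
  qed
  ultimately have "eventually (\<lambda>n. prob (A n) > c) sequentially"
    using c by (auto dest: order_tendstoD)
  then show ?thesis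
  proof eventually_elim
    case (elim n)
    have "prob (A n) \<le> prob {\<omega> \<in> space M. P n \<omega>}"
      using meas by (intro finite_measure_mono) (auto simp: A_def)
    then show ?case using elim by linarith
  qed
qed

lemma (in prob_space) exists_half_prob_lower_bound:
  fixes X :: "'a \<Rightarrow> real"
  assumes [measurable]: "X \<in> borel_measurable M"
  obtains a where "prob {\<omega> \<in> space M. X \<omega> \<ge> - a} \<ge> 1/2"
proof -
  have level_sets: "{\<omega> \<in> space M. X \<omega> \<ge> - real n} \<in> events" for n by measurable
  have "AE \<omega> in M. eventually (\<lambda>n. X \<omega> \<ge> - real n) sequentially"
  proof (rule AE_I2)
    fix \<omega>
    obtain N :: nat where N: "- X \<omega> \<le> real N" using real_arch_simple by blast
    have "X \<omega> \<ge> - real n" if "N \<le> n" for n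
      using N of_nat_le_iff[of N n] that by linarith
    then show "eventually (\<lambda>n. X \<omega> \<ge> - real n) sequentially"
      unfolding eventually_sequentially by blast
  qed
  then have "eventually (\<lambda>n. prob {\<omega> \<in> space M. X \<omega> \<ge> - real n} > 1/2) sequentially"
    by (rule AE_eventually_prob) (simp_all add: level_sets)
  then obtain n where "prob {\<omega> \<in> space M. X \<omega> \<ge> - real n} > 1/2"
    unfolding eventually_sequentially by blast
  then show ?thesis by (intro that[of "real n"]) simp
qed

lemma rate_fn_le:
  assumes "measure M {\<omega> \<in> space M. partition_fn V T \<omega> \<le> exp ((lam - eps) * real T)} \<ge> exp (- R)"
  shows "rate_fn M V lam eps T \<le> ereal R"
proof -
  define p where "p = measure M {\<omega> \<in> space M. partition_fn V T \<omega> \<le> exp ((lam - eps) * real T)}"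
  have p: "exp (- R) \<le> p" using assms unfolding p_def .
  then have p0: "p > 0" using exp_gt_zero[of "-R"] by linarith
  have "- ln p \<le> R" using ln_mono[OF p exp_gt_zero] by simp
  then show ?thesis using p0 unfolding rate_fn_def Let_def p_def[symmetric] by simp
qed

lemma limsup_ratio_finite:
  fixes r :: "nat \<Rightarrow> ereal" and D :: "nat \<Rightarrow> real"
  assumes "eventually (\<lambda>T. 1 \<le> D T \<and> r T \<le> ereal (A * D T + B)) sequentially" and "B \<ge> 0"
  shows "limsup (\<lambda>T. r T / ereal (D T)) < \<infinity>"
proof -
  have "eventually (\<lambda>T. r T / ereal (D T) \<le> ereal (A + B)) sequentially"
    using assms(1)
  proof eventually_elim
    case (elim T)
    then have D: "D T > 0" by simp
    have "B \<le> B * D T" using mult_left_mono[of 1 "D T" B] elim \<open>B \<ge> 0\<close> by simp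
    then have "ereal (A * D T + B) \<le> ereal ((A + B) * D T)" by (simp add: distrib_right)
    then have r: "r T \<le> ereal ((A + B) * D T)" by (rule order_trans[OF conjunct2[OF elim]])
    show ?case
    proof (cases "r T")
      case (real x)
      then have "x / D T \<le> A + B" using r D by (simp add: divide_le_eq)
      then show ?thesis using real D by (simp add: ereal_divide)
    next
      case PInf then show ?thesis using r by simp
    next
      case MInf then show ?thesis using D by (simp add: divide_ereal_def)
    qed
  qed
  then have "limsup (\<lambda>T. r T / ereal (D T)) \<le> ereal (A + B)" by (rule Limsup_bounded)
  then show ?thesis using order.strict_trans1[of _ "ereal (A + B)" \<infinity>] by simp
qed

lemma eventually_le_linear:
  assumes "c > 0"
  shows "eventually (\<lambda>T::nat. B \<le> c * real T) sequentially"
proof -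
  obtain N :: nat where N: "real N \<ge> B / c" using real_arch_simple by blast
  have BN: "B \<le> c * real N" using N assms by (simp add: divide_le_eq mult.commute)
  have "B \<le> c * real T" if "N \<le> T" for T
    using that assms by (intro order_trans[OF BN] mult_left_mono) auto
  then show ?thesis unfolding eventually_sequentially by blast
qed

section \<open>An i.i.d. potential field\<close>

locale iid_field = prob_space M for M :: "'a measure" +
  fixes V :: "nat \<times> (int ^ 'd) \<Rightarrow> 'a \<Rightarrow> real"
  assumes measurable_V[measurable]: "\<And>i. V i \<in> borel_measurable M"
    and indep: "indep_vars (\<lambda>_. borel) V UNIV"
    and ident: "\<And>i. distr M borel (V i) = distr M borel (V (0, 0))"
begin

lemma partition_fn_measurable[measurable]: "partition_fn V T \<in> borel_measurable M"
  unfolding partition_fn_paths by measurable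

lemma prob_V_eq: "A \<in> sets borel \<Longrightarrow> prob (V i -` A \<inter> space M) = prob (V (0,0) -` A \<inter> space M)"
  using ident[of i] by (metis measurable_V measure_distr sets_distr)

subsection \<open>The box strategy\<close>

text \<open>Forcing the potential below \<open>-c\<close> on the whole reachable box costs at most
  \<open>T (2T+1)^d\<close> independent factors \<open>q = Q(V \<le> -c)\<close>.\<close>
lemma prob_partition_small_box:
  assumes "T \<ge> 1"
  shows "prob {\<omega> \<in> space M. partition_fn V T \<omega> \<le> exp (- c * real T)}
     \<ge> prob {\<omega> \<in> space M. V (0,0) \<omega> \<le> - c} ^ (T * (2*T+1) ^ CARD('d))"
proof -
  define q where "q = prob {\<omega> \<in> space M. V (0,0) \<omega> \<le> - c}"
  define J where "J = {..<T} \<times> (cube T :: (int^'d) set)"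
  define F where "F = (\<Inter>s\<in>J. V s -` {..-c} \<inter> space M)"
  have finJ: "finite J" unfolding J_def using finite_card_cube by auto
  have "(0, 0) \<in> J" unfolding J_def cube_def using assms by simp
  then have neJ: "J \<noteq> {}" by blast
  have cardJ: "card J \<le> T * (2*T+1) ^ CARD('d)"
    unfolding J_def card_cartesian_product using finite_card_cube[where 'd='d, of T] by simp
  have "prob F = (\<Prod>s\<in>J. prob (V s -` {..-c} \<inter> space M))"
    unfolding F_def by (rule indep_varsD[OF indep neJ finJ]) auto
  also have "\<dots> = (\<Prod>s\<in>J. q)"
  proof (rule prod.cong[OF refl])
    fix s
    have "V s -` {..-c} \<inter> space M = {\<omega> \<in> space M. V s \<omega> \<le> - c}" for s by auto
    then show "prob (V s -` {..-c} \<inter> space M) = q"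
      unfolding q_def using prob_V_eq[of "{..-c}" s] by simp
  qed
  also have "\<dots> = q ^ card J" by simp
  finally have "q ^ (T * (2*T+1) ^ CARD('d)) \<le> prob F"
    using cardJ by (simp add: q_def power_decreasing)
  also have "\<dots> \<le> prob {\<omega> \<in> space M. partition_fn V T \<omega> \<le> exp (- c * real T)}"
  proof (rule finite_measure_mono)
    show "F \<subseteq> {\<omega> \<in> space M. partition_fn V T \<omega> \<le> exp (- c * real T)}"
    proof
      fix \<omega> assume "\<omega> \<in> F"
      then have \<omega>: "\<omega> \<in> space M"
        and small: "\<And>t x. t < T \<Longrightarrow> x \<in> cube T \<Longrightarrow> V (t, x) \<omega> \<le> - c"
        using neJ unfolding F_def J_def by auto
      have "partition_fn V T \<omega> \<le> exp (- c * real T)" using small by (rule partition_fn_le_of_box_bound)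
      then show "\<omega> \<in> {\<omega> \<in> space M. partition_fn V T \<omega> \<le> exp (- c * real T)}" using \<omega> by simp
    qed
  qed measurable
  finally show ?thesis unfolding q_def .
qed

lemma rate_limsup_volume:
  assumes unbounded: "\<And>c. prob {\<omega> \<in> space M. V (0,0) \<omega> \<le> - c} > 0"
  shows "limsup (\<lambda>T. rate_fn M V lam \<epsilon> T / ereal (real T ^ (1 + CARD('d)))) < \<infinity>"
proof -
  define c where "c = \<bar>\<epsilon> - lam\<bar>"
  define q where "q = prob {\<omega> \<in> space M. V (0,0) \<omega> \<le> - c}"
  have q: "0 < q" "q \<le> 1" using unbounded unfolding q_def by auto
  define K where "K = - ln q * 3 ^ CARD('d)"
  show ?thesis
  proof (rule limsup_ratio_finite[where A = K and B = 0])
    show "eventually (\<lambda>T. 1 \<le> real T ^ (1 + CARD('d)) \<and>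
        rate_fn M V lam \<epsilon> T \<le> ereal (K * real T ^ (1 + CARD('d)) + 0)) sequentially"
      using eventually_ge_at_top[of 1]
    proof eventually_elim
      case (elim T)
      define N where "N = T * (2*T+1) ^ CARD('d)"
      have "real N = real T * (2 * real T + 1) ^ CARD('d)" unfolding N_def by (simp add: add.commute)
      also have "\<dots> \<le> real T * (3 * real T) ^ CARD('d)"
        using elim by (intro mult_left_mono power_mono) auto
      finally have N: "real N \<le> 3 ^ CARD('d) * real T ^ (1 + CARD('d))"
        by (simp add: power_mult_distrib mult_ac)
      have "exp (- (K * real T ^ (1 + CARD('d)))) \<le> exp (real N * ln q)"
        using mult_left_mono[OF N, of "- ln q"] q by (simp add: K_def algebra_simps)
      also have "\<dots> = q ^ N" using q by (simp add: exp_of_nat_mult)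
      also have "\<dots> \<le> prob {\<omega> \<in> space M. partition_fn V T \<omega> \<le> exp (- c * real T)}"
        unfolding q_def N_def using elim by (rule prob_partition_small_box)
      also have "\<dots> \<le> prob {\<omega> \<in> space M. partition_fn V T \<omega> \<le> exp ((lam - \<epsilon>) * real T)}"
      proof (rule finite_measure_mono)
        have "- c * real T \<le> (lam - \<epsilon>) * real T" unfolding c_def by (intro mult_right_mono) auto
        then have "exp (- c * real T) \<le> exp ((lam - \<epsilon>) * real T)" by simp
        then show "{\<omega> \<in> space M. partition_fn V T \<omega> \<le> exp (- c * real T)}
            \<subseteq> {\<omega> \<in> space M. partition_fn V T \<omega> \<le> exp ((lam - \<epsilon>) * real T)}"
          by (auto dest: order.trans)
      qed measurable
      finally have "rate_fn M V lam \<epsilon> T \<le> ereal (K * real T ^ (1 + CARD('d)) + 0)"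
        by (simp add: rate_fn_le)
      moreover have "1 \<le> real T ^ (1 + CARD('d))" using elim by (intro one_le_power) simp
      ultimately show ?case by simp
    qed
  qed simp
qed

subsection \<open>The origin strategy\<close>

definition off_origin :: "(nat \<times> (int^'d)) set" where
  "off_origin = UNIV - {(0,0)}"

definition field_off_origin :: "'a \<Rightarrow> (nat \<times> (int^'d) \<Rightarrow> real)" where
  "field_off_origin \<omega> = restrict (\<lambda>i. V i \<omega>) off_origin"

definition partition_rest :: "nat \<Rightarrow> (nat \<times> (int^'d) \<Rightarrow> real) \<Rightarrow> real" where
  "partition_rest T v = (\<Sum>xs\<in>(paths T :: (int^'d) list set). (1 / (2 * real CARD('d)) ^ (T - 1)) *
      exp (\<Sum>t<T-1. v (Suc t, walk xs (Suc t))))"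

lemma partition_rest_nonneg: "partition_rest T v \<ge> 0"
  unfolding partition_rest_def by (intro sum_nonneg) simp

lemma partition_fn_split:
  assumes "T \<ge> 1"
  shows "partition_fn V T \<omega> = exp (V (0,0) \<omega>) * partition_rest T (field_off_origin \<omega>)"
proof -
  obtain n where n: "T = Suc n" using assms by (cases T) auto
  have "(\<Sum>t<T. V (t, walk xs t) \<omega>)
      = V (0,0) \<omega> + (\<Sum>t<T-1. field_off_origin \<omega> (Suc t, walk xs (Suc t)))" for xs :: "(int^'d) list"
    unfolding n sum.lessThan_Suc_shift
    by (simp add: walk_def field_off_origin_def off_origin_def)
  then show ?thesis
    unfolding partition_fn_paths partition_rest_def
    by (simp add: exp_add sum_distrib_left algebra_simps)
qed

lemma partition_rest_measurable:
  "partition_rest T \<in> borel_measurable (PiM off_origin (\<lambda>_. borel))"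
proof -
  have "(\<lambda>v. v (Suc t, x)) \<in> borel_measurable (PiM off_origin (\<lambda>_. borel))" for t x
    by (rule measurable_component_singleton) (simp add: off_origin_def)
  then show ?thesis unfolding partition_rest_def by measurable
qed

lemma partition_rest_field_measurable[measurable]:
  "(\<lambda>\<omega>. partition_rest T (field_off_origin \<omega>)) \<in> borel_measurable M"
proof -
  have "field_off_origin \<in> measurable M (PiM off_origin (\<lambda>_. borel))"
    unfolding field_off_origin_def[abs_def] by (rule measurable_restrict) simp
  then show ?thesis by (rule measurable_compose[OF _ partition_rest_measurable])
qed

text \<open>\<open>V(0,0)\<close> is independent of the field away from the origin, hence of \<open>Z'(T)\<close>.\<close>
lemma prob_origin_rest_indep:
  "prob {\<omega> \<in> space M. V (0,0) \<omega> \<le> a \<and> partition_rest T (field_off_origin \<omega>) \<le> b}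
    = prob {\<omega> \<in> space M. V (0,0) \<omega> \<le> a} * prob {\<omega> \<in> space M. partition_rest T (field_off_origin \<omega>) \<le> b}"
proof -
  let ?X = "\<lambda>\<omega>. restrict (\<lambda>i. V i \<omega>) {(0,0)}"
  let ?P0 = "PiM {(0::nat,0::int^'d)} (\<lambda>_. borel)" and ?P1 = "PiM off_origin (\<lambda>_. borel)"
  have ind: "indep_var ?P0 ?X ?P1 field_off_origin"
    unfolding field_off_origin_def[abs_def]
    by (rule indep_var_restrict[OF indep]) (auto simp: off_origin_def)
  define S1 where "S1 = {v \<in> space ?P0. v (0,0) \<le> a}"
  define S2 where "S2 = {v \<in> space ?P1. partition_rest T v \<le> b}"
  have "(\<lambda>v. v (0,0)) \<in> borel_measurable ?P0" by (rule measurable_component_singleton) simp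
  then have S1: "S1 \<in> sets ?P0" unfolding S1_def by measurable
  have S2: "S2 \<in> sets ?P1" unfolding S2_def using partition_rest_measurable[of T] by measurable
  have "prob ((\<lambda>x. (?X x, field_off_origin x)) -` (S1 \<times> S2) \<inter> space M)
      = prob (?X -` S1 \<inter> space M) * prob (field_off_origin -` S2 \<inter> space M)"
    by (rule indep_varD[OF ind S1 S2])
  then show ?thesis
    unfolding S1_def S2_def field_off_origin_def by (simp add: space_PiM vimage_def Int_def conj_commute)
qed

text \<open>Since \<open>(ln Z(T))/T \<rightarrow> \<lambda>\<close> a.s. and \<open>V(0,0)\<close> is not too negative with probability
  \<open>\<ge> 1/2\<close>, eventually \<open>Z'(T) \<le> exp((\<lambda>+\<epsilon>)T)\<close> with probability at least \<open>1/4\<close>.\<close>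
lemma prob_partition_rest_small:
  assumes eps: "eps > 0"
    and lam_lim: "AE \<omega> in M. (\<lambda>T. ln (partition_fn V T \<omega>) / real T) \<longlonglongrightarrow> lam"
  shows "eventually (\<lambda>T. prob {\<omega> \<in> space M.
           partition_rest T (field_off_origin \<omega>) \<le> exp ((lam + eps) * real T)} \<ge> 1/4) sequentially"
proof -
  obtain a where a: "prob {\<omega> \<in> space M. V (0,0) \<omega> \<ge> - a} \<ge> 1/2"
    using exists_half_prob_lower_bound[OF measurable_V] by blast
  have "AE \<omega> in M. eventually (\<lambda>T. partition_fn V T \<omega> \<le> exp ((lam + eps/2) * real T)) sequentially"
    using lam_lim
  proof eventually_elim
    case (elim \<omega>)
    have "eventually (\<lambda>T. ln (partition_fn V T \<omega>) / real T < lam + eps/2) sequentially"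
      using elim eps by (intro order_tendstoD(2)) auto
    then show ?case using eventually_ge_at_top[of 1]
    proof eventually_elim
      case (elim T)
      then have "ln (partition_fn V T \<omega>) \<le> (lam + eps/2) * real T" by (simp add: divide_less_eq)
      then have "exp (ln (partition_fn V T \<omega>)) \<le> exp ((lam + eps/2) * real T)" by simp
      then show ?case using partition_fn_pos[of V T \<omega>] by simp
    qed
  qed
  then have "eventually (\<lambda>T. prob {\<omega> \<in> space M. partition_fn V T \<omega> \<le> exp ((lam + eps/2) * real T)} > 3/4)
      sequentially"
  proof (rule AE_eventually_prob)
    show "{\<omega> \<in> space M. partition_fn V T \<omega> \<le> exp ((lam + eps/2) * real T)} \<in> events" for T
      by measurable
  qed simp
  moreover have "eventually (\<lambda>T. a \<le> eps/2 * real T) sequentially"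
    using eps by (intro eventually_le_linear) simp
  ultimately show ?thesis using eventually_ge_at_top[of 1]
  proof eventually_elim
    case (elim T)
    define A where "A = {\<omega> \<in> space M. partition_fn V T \<omega> \<le> exp ((lam + eps/2) * real T)}"
    define B where "B = {\<omega> \<in> space M. V (0,0) \<omega> \<ge> - a}"
    define W where "W = {\<omega> \<in> space M. partition_rest T (field_off_origin \<omega>) \<le> exp ((lam + eps) * real T)}"
    have "A \<inter> B \<subseteq> W"
    proof
      fix \<omega> assume "\<omega> \<in> A \<inter> B"
      then have \<omega>: "\<omega> \<in> space M" "partition_fn V T \<omega> \<le> exp ((lam + eps/2) * real T)" "- a \<le> V (0,0) \<omega>"
        unfolding A_def B_def by auto
      have "partition_rest T (field_off_origin \<omega>) = partition_fn V T \<omega> * exp (- V (0,0) \<omega>)"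
        using partition_fn_split[of T \<omega>] elim by (simp add: exp_minus field_simps)
      also have "\<dots> \<le> exp ((lam + eps/2) * real T) * exp a"
        using \<omega> by (intro mult_mono) auto
      also have "\<dots> \<le> exp ((lam + eps) * real T)"
        using elim by (simp add: exp_add[symmetric] algebra_simps)
      finally show "\<omega> \<in> W" unfolding W_def using \<omega> by simp
    qed
    then have "prob (A \<inter> B) \<le> prob W" unfolding W_def by (intro finite_measure_mono) measurable
    moreover have "prob (A \<inter> B) \<ge> prob A + prob B - 1"
      unfolding A_def B_def by (intro prob_Int_ge) measurable
    ultimately show ?case using a elim unfolding A_def B_def W_def by linarith
  qed
qed

lemma prob_partition_small_origin:
  assumes eps: "eps > 0"
    and lam_lim: "AE \<omega> in M. (\<lambda>T. ln (partition_fn V T \<omega>) / real T) \<longlonglongrightarrow> lam"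
  shows "eventually (\<lambda>T. prob {\<omega> \<in> space M. partition_fn V T \<omega> \<le> exp ((lam - eps) * real T)}
            \<ge> prob {\<omega> \<in> space M. V (0,0) \<omega> \<le> - (2 * eps * real T)} / 4) sequentially"
  using prob_partition_rest_small[OF eps lam_lim] eventually_ge_at_top[of 1]
proof eventually_elim
  case (elim T)
  let ?p0 = "prob {\<omega> \<in> space M. V (0,0) \<omega> \<le> - (2 * eps * real T)}"
  define C where "C = {\<omega> \<in> space M. V (0,0) \<omega> \<le> - (2 * eps * real T) \<and>
      partition_rest T (field_off_origin \<omega>) \<le> exp ((lam + eps) * real T)}"
  have "?p0 / 4 \<le> prob C"
    unfolding C_def prob_origin_rest_indep using elim mult_left_mono[of "1/4" _ ?p0] by simp
  also have "\<dots> \<le> prob {\<omega> \<in> space M. partition_fn V T \<omega> \<le> exp ((lam - eps) * real T)}"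
  proof (rule finite_measure_mono)
    show "C \<subseteq> {\<omega> \<in> space M. partition_fn V T \<omega> \<le> exp ((lam - eps) * real T)}"
    proof
      fix \<omega> assume "\<omega> \<in> C"
      then have \<omega>: "\<omega> \<in> space M" "V (0,0) \<omega> \<le> - (2 * eps * real T)"
        "partition_rest T (field_off_origin \<omega>) \<le> exp ((lam + eps) * real T)" unfolding C_def by auto
      have "partition_fn V T \<omega> = exp (V (0,0) \<omega>) * partition_rest T (field_off_origin \<omega>)"
        using partition_fn_split elim by simp
      also have "\<dots> \<le> exp (- (2 * eps * real T)) * exp ((lam + eps) * real T)"
        using \<omega> partition_rest_nonneg by (intro mult_mono) auto
      also have "\<dots> = exp ((lam - eps) * real T)" by (simp add: exp_add[symmetric] algebra_simps)
      finally show "\<omega> \<in> {\<omega> \<in> space M. partition_fn V T \<omega> \<le> exp ((lam - eps) * real T)}" using \<omega> by simp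
    qed
  qed measurable
  finally show ?case .
qed

text \<open>With the tail bound \<open>Q(V \<le> -y) \<ge> exp(-y G(y))\<close>, the rate is eventually at most
  \<open>2\<epsilon>T G(2\<epsilon>T) + ln 4\<close>; so it is \<open>O(T H(T))\<close> whenever \<open>G(2\<epsilon>T) = O(H(T))\<close>.\<close>
lemma rate_limsup_tail:
  assumes eps: "\<epsilon> > 0"
    and lam_lim: "AE \<omega> in M. (\<lambda>T. ln (partition_fn V T \<omega>) / real T) \<longlonglongrightarrow> lam"
    and tail: "\<forall>y\<ge>xmin. exp (- y * G y) \<le> prob {\<omega> \<in> space M. V (0,0) \<omega> \<le> - y}"
    and scale: "eventually (\<lambda>T. 1 \<le> real T * H T \<and> G (2 * \<epsilon> * real T) \<le> K * H T) sequentially"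
  shows "limsup (\<lambda>T. rate_fn M V lam \<epsilon> T / ereal (real T * H T)) < \<infinity>"
proof (rule limsup_ratio_finite[where A = "2 * \<epsilon> * K" and B = "ln 4"])
  have "eventually (\<lambda>T. xmin \<le> 2 * \<epsilon> * real T) sequentially"
    using eps by (intro eventually_le_linear) simp
  then show "eventually (\<lambda>T. 1 \<le> real T * H T \<and>
      rate_fn M V lam \<epsilon> T \<le> ereal (2 * \<epsilon> * K * (real T * H T) + ln 4)) sequentially"
    using prob_partition_small_origin[OF eps lam_lim] scale
  proof eventually_elim
    case (elim T)
    let ?y = "2 * \<epsilon> * real T"
    have "exp (- (?y * G ?y + ln 4)) = exp (- ?y * G ?y) / 4" by (simp add: exp_diff exp_minus)
    also have "\<dots> \<le> prob {\<omega> \<in> space M. partition_fn V T \<omega> \<le> exp ((lam - \<epsilon>) * real T)}"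
      using tail[rule_format, of ?y] elim by simp
    finally have rate: "rate_fn M V lam \<epsilon> T \<le> ereal (?y * G ?y + ln 4)" by (rule rate_fn_le)
    have "?y * G ?y \<le> ?y * (K * H T)" using elim eps by (intro mult_left_mono) auto
    then have "ereal (?y * G ?y + ln 4) \<le> ereal (2 * \<epsilon> * K * (real T * H T) + ln 4)"
      by (simp add: algebra_simps)
    then show ?case using elim order_trans[OF rate] by simp
  qed
qed simp

end

section \<open>The tail function \<open>G\<close>\<close>

lemma (in prob_space) tail_lower_bound:
  assumes [measurable]: "X \<in> borel_measurable M"
    and law: "\<forall>x\<ge>xmin. prob {\<omega> \<in> space M. - X \<omega> > x} = exp (- x * G x)"
  shows "\<forall>y\<ge>xmin. exp (- y * G y) \<le> prob {\<omega> \<in> space M. X \<omega> \<le> - y}"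
proof (intro allI impI)
  fix y assume "y \<ge> xmin"
  show "exp (- y * G y) \<le> prob {\<omega> \<in> space M. X \<omega> \<le> - y}"
    unfolding law[rule_format, OF \<open>y \<ge> xmin\<close>, symmetric] by (rule finite_measure_mono) auto
qed

lemma (in prob_space) unbounded_below_of_tail:
  assumes [measurable]: "X \<in> borel_measurable M"
    and tail: "\<forall>y\<ge>xmin. exp (- y * G y) \<le> prob {\<omega> \<in> space M. X \<omega> \<le> - y}"
  shows "prob {\<omega> \<in> space M. X \<omega> \<le> - c} > 0"
proof -
  define y where "y = max c xmin"
  have "0 < exp (- y * G y)" by simp
  also have "\<dots> \<le> prob {\<omega> \<in> space M. X \<omega> \<le> - y}" using tail by (simp add: y_def)
  also have "\<dots> \<le> prob {\<omega> \<in> space M. X \<omega> \<le> - c}"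
  proof (rule finite_measure_mono)
    show "{\<omega> \<in> space M. X \<omega> \<le> - y} \<subseteq> {\<omega> \<in> space M. X \<omega> \<le> - c}" by (auto simp: y_def)
  qed measurable
  finally show ?thesis .
qed

lemma eventually_one_le_scaled:
  assumes "filterlim G at_top at_top" "a > 0"
  shows "eventually (\<lambda>T::nat. 1 \<le> real T * G (a * real T)) sequentially"
proof -
  obtain N where N: "\<And>x. x \<ge> N \<Longrightarrow> G x \<ge> 1"
    using assms(1) unfolding filterlim_at_top eventually_at_top_linorder by blast
  show ?thesis using eventually_le_linear[OF assms(2), of N] eventually_ge_at_top[of 1]
  proof eventually_elim
    case (elim T)
    then have "1 \<le> G (a * real T)" by (intro N) simp
    then show ?case using elim mult_mono[of 1 "real T" 1 "G (a * real T)"] by simp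
  qed
qed

text \<open>Under either hypothesis of part (iii), \<open>G(2\<epsilon>x) \<le> K G(x)\<close> for all \<open>x > 0\<close>:
  for \<open>2\<epsilon> \<le> 1\<close> by monotonicity, otherwise since \<open>G(x)/x^d\<close> is non-increasing.\<close>
lemma G_scale_bound:
  fixes G :: "real \<Rightarrow> real"
  assumes G_mono: "mono_on {0..} G" and G0: "G 0 = 0" and eps: "\<epsilon> > 0"
    and cond: "\<epsilon> < 1/2 \<or> (\<forall>x y. 0 < x \<longrightarrow> x \<le> y \<longrightarrow> G y / y ^ d \<le> G x / x ^ d)"
  shows "\<exists>K. \<forall>x>0. G (2 * \<epsilon> * x) \<le> K * G x"
proof -
  define K where "K = max 1 ((2 * \<epsilon>) ^ d)"
  have "G (2 * \<epsilon> * x) \<le> K * G x" if x: "x > 0" for x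
  proof -
    have Gx: "G x \<ge> 0" using mono_onD[OF G_mono, of 0 x] x G0 by simp
    have "1 \<le> K" "(2 * \<epsilon>) ^ d \<le> K" unfolding K_def by simp_all
    then have K1: "G x \<le> K * G x" and K2: "(2 * \<epsilon>) ^ d * G x \<le> K * G x"
      using mult_right_mono[OF _ Gx] by (metis mult_1)+
    show ?thesis
    proof (cases "2 * \<epsilon> \<le> 1")
      case True
      then have "G (2 * \<epsilon> * x) \<le> G x"
        using x eps by (intro mono_onD[OF G_mono]) (auto simp: mult_left_le_one_le)
      then show ?thesis using K1 by linarith
    next
      case False
      then have "G (2 * \<epsilon> * x) / (2 * \<epsilon> * x) ^ d \<le> G x / x ^ d" using cond x by auto
      then have "G (2 * \<epsilon> * x) \<le> (2 * \<epsilon>) ^ d * G x"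
        using x eps by (simp add: divide_le_eq power_mult_distrib field_simps)
      then show ?thesis using K2 by linarith
    qed
  qed
  then show ?thesis by blast
qed

theorem mainTheorem13:
  fixes M :: "'a measure" and V :: "nat \<times> (int ^ 'd) \<Rightarrow> 'a \<Rightarrow> real"
    and G :: "real \<Rightarrow> real" and lam :: real
  assumes prob: "prob_space M"
    and meas: "\<And>i. V i \<in> borel_measurable M"
    and indep: "prob_space.indep_vars M (\<lambda>_. borel) V UNIV"
    and ident: "\<And>i. distr M borel (V i) = distr M borel (V (0, 0))"
    and AS0: "\<not> (\<exists>c. AE \<omega> in M. V (0, 0) \<omega> = c)"
    and AS1: "integral\<^sup>L M (V (0, 0)) = 0"
    and AS2: "\<exists>\<eta>0>0. \<forall>\<eta>. \<bar>\<eta>\<bar> < \<eta>0 \<longrightarrow> integrable M (\<lambda>\<omega>. exp (\<eta> * V (0, 0) \<omega>))"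
    and G_cont: "continuous_on {0..} G"
    and G_mono: "strict_mono_on {0..} G"
    and G0: "G 0 = 0"
    and G_lim: "filterlim G at_top at_top"
    and AS3: "\<exists>x0>0. \<forall>x\<ge>x0. measure M {\<omega> \<in> space M. - V (0, 0) \<omega> > x} = exp (- x * G x)"
    and lam_nonneg: "lam \<ge> 0"
    and lam_lim: "AE \<omega> in M. (\<lambda>T. ln (partition_fn V T \<omega>) / real T) \<longlonglongrightarrow> lam"
  shows
    "(\<forall>\<epsilon>>0. limsup (\<lambda>T. rate_fn M V lam \<epsilon> T / ereal (real T ^ (1 + CARD('d)))) < \<infinity>)
     \<and> (\<forall>\<epsilon>>0. limsup (\<lambda>T. rate_fn M V lam \<epsilon> T / ereal (real T * G (2 * \<epsilon> * real T))) < \<infinity>)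
     \<and> (\<forall>\<epsilon>. ((0 < \<epsilon> \<and> \<epsilon> < 1/2) \<or>
              (0 < \<epsilon> \<and> (\<forall>x y. 0 < x \<longrightarrow> x \<le> y \<longrightarrow> G y / y ^ CARD('d) \<le> G x / x ^ CARD('d))))
           \<longrightarrow> limsup (\<lambda>T. rate_fn M V lam \<epsilon> T / ereal (real T * G (real T))) < \<infinity>)"
proof -
  interpret iid_field M V
    by (rule iid_field.intro[OF prob iid_field_axioms.intro[OF meas indep ident]])
  obtain x0 where "\<forall>x\<ge>x0. prob {\<omega> \<in> space M. - V (0, 0) \<omega> > x} = exp (- x * G x)"
    using AS3 by blast
  then have tail: "\<forall>y\<ge>x0. exp (- y * G y) \<le> prob {\<omega> \<in> space M. V (0,0) \<omega> \<le> - y}"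
    by (rule tail_lower_bound[OF meas])
  have scaled_G: "eventually (\<lambda>T. 1 \<le> real T * G (a * real T)) sequentially" if "a > 0" for a
    using eventually_one_le_scaled[OF G_lim that] .
  show ?thesis
  proof (intro conjI allI impI)
    show "limsup (\<lambda>T. rate_fn M V lam \<epsilon> T / ereal (real T ^ (1 + CARD('d)))) < \<infinity>" for \<epsilon>
      using rate_limsup_volume unbounded_below_of_tail[OF meas tail] by blast
    show "limsup (\<lambda>T. rate_fn M V lam \<epsilon> T / ereal (real T * G (2 * \<epsilon> * real T))) < \<infinity>"
      if "\<epsilon> > 0" for \<epsilon>
      using scaled_G[of "2 * \<epsilon>"] that
      by (intro rate_limsup_tail[where K = 1, OF that lam_lim tail]) simp
  next
    fix \<epsilon> :: real
    assume cond: "(0 < \<epsilon> \<and> \<epsilon> < 1/2) \<or>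
      (0 < \<epsilon> \<and> (\<forall>x y. 0 < x \<longrightarrow> x \<le> y \<longrightarrow> G y / y ^ CARD('d) \<le> G x / x ^ CARD('d)))"
    then have eps: "\<epsilon> > 0" by auto
    obtain K where K: "\<And>x. x > 0 \<Longrightarrow> G (2 * \<epsilon> * x) \<le> K * G x"
      using G_scale_bound[OF strict_mono_on_imp_mono_on[OF G_mono] G0 eps] cond by blast
    have "eventually (\<lambda>T. 1 \<le> real T * G (real T) \<and> G (2 * \<epsilon> * real T) \<le> K * G (real T)) sequentially"
      using scaled_G[of 1, simplified] eventually_ge_at_top[of 1] by eventually_elim (simp add: K)
    then show "limsup (\<lambda>T. rate_fn M V lam \<epsilon> T / ereal (real T * G (real T))) < \<infinity>"
      by (rule rate_limsup_tail[OF eps lam_lim tail])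
  qed
qed

end
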